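(* Let $(\mathbb R/\pi\mathbb Z)^3_{\rm reg}=\{(\alpha,\beta,\gamma)\in(\mathbb R/\pi\mathbb Z)^3:\sin2\beta\neq0\}$ and $U=\{a\in\mathcal A_2:|a|=1\}\setminus(\mathcal A_1e_2\cup\mathcal A_1)$. The map $$\Psi:(\mathbb R/\pi\mathbb Z)^3_{\rm reg}\to U/\{\pm1\},\qquad(\alpha,\beta,\gamma)\mapsto\pm\exp(\alpha e_1)\exp(\beta e_1e_2)\exp(\gamma e_1)$$ is a two-fold covering map; explicitly $\Psi^{-1}(\Psi(\alpha,\beta,\gamma))=\{(\alpha,\beta,\gamma),(\alpha+\tfrac12\pi,-\beta,\gamma+\tfrac12\pi)\}$.
   Context: $\mathcal A_2$ is the real associative algebra generated by $e_1,e_2$ with $e_1^2=e_2^2=-1$, $e_1e_2=-e_2e_1$, with Euclidean norm in the basis $1,e_1,e_2,e_1e_2$; $\exp x=\sum_{m\ge0}x^m/m!$. $\mathcal A_1=\mathbb R+\mathbb Re_1$ and $\mathcal A_1e_2=\mathbb Re_2+\mathbb Re_1e_2$. *)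

theory Defs
  imports "HOL-Analysis.Analysis"
begin

text \<open>Elements of A_2 are represented as vectors in real^4 with respect to the basis
  1, e1, e2, e1e2 (components 1,2,3,4); the norm of real^4 is the Euclidean norm
  in this basis.  The product is determined by e1^2 = e2^2 = -1, e1 e2 = - e2 e1.\<close>

type_synonym A2 = "real^4"

definition A2mult :: "A2 \<Rightarrow> A2 \<Rightarrow> A2" where
  "A2mult x y = vector [
     x$1*y$1 - x$2*y$2 - x$3*y$3 - x$4*y$4,
     x$1*y$2 + x$2*y$1 + x$3*y$4 - x$4*y$3,
     x$1*y$3 - x$2*y$4 + x$3*y$1 + x$4*y$2,
     x$1*y$4 + x$2*y$3 - x$3*y$2 + x$4*y$1]"

definition A2one :: A2 where "A2one = vector [1, 0, 0, 0]"
definition e1 :: A2 where "e1 = vector [0, 1, 0, 0]"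
definition e2 :: A2 where "e2 = vector [0, 0, 1, 0]"
definition e12 :: A2 where "e12 = vector [0, 0, 0, 1]"

primrec A2pow :: "A2 \<Rightarrow> nat \<Rightarrow> A2" where
  "A2pow x 0 = A2one"
| "A2pow x (Suc m) = A2mult x (A2pow x m)"

definition A2exp :: "A2 \<Rightarrow> A2" where
  "A2exp x = (\<Sum>m. (1 / fact m) *\<^sub>R A2pow x m)"

definition A1 :: "A2 set" where "A1 = {r *\<^sub>R A2one + s *\<^sub>R e1 | r s. True}"
definition A1e2 :: "A2 set" where "A1e2 = {r *\<^sub>R e2 + s *\<^sub>R e12 | r s. True}"

definition Uset :: "A2 set" where
  "Uset = {a. norm a = 1} - (A1e2 \<union> A1)"

definition quot_top :: "'a topology \<Rightarrow> 'a rel \<Rightarrow> 'a set topology" where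
  "quot_top X r = topology (\<lambda>W. W \<subseteq> topspace X // r \<and> openin X (\<Union>W))"

definition covering_map :: "'a topology \<Rightarrow> 'b topology \<Rightarrow> ('a \<Rightarrow> 'b) \<Rightarrow> bool" where
  "covering_map X Y p \<longleftrightarrow>
     continuous_map X Y p \<and> p ` topspace X = topspace Y \<and>
     (\<forall>y \<in> topspace Y. \<exists>T. y \<in> T \<and> openin Y T \<and>
        (\<exists>V. \<Union>V = {x \<in> topspace X. p x \<in> T} \<and>
             (\<forall>u \<in> V. openin X u) \<and> pairwise disjnt V \<and>
             (\<forall>u \<in> V. homeomorphic_map (subtopology X u) (subtopology Y T) p)))"

definition two_fold_covering_map :: "'a topology \<Rightarrow> 'b topology \<Rightarrow> ('a \<Rightarrow> 'b) \<Rightarrow> bool" where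
  "two_fold_covering_map X Y p \<longleftrightarrow> covering_map X Y p \<and>
     (\<forall>y \<in> topspace Y. card {x \<in> topspace X. p x = y} = 2)"

text \<open>Representatives (alpha,beta,gamma) in R^3 with sin 2 beta \<noteq> 0; (R/piZ)^3_reg is
  the quotient of this (saturated, open) set by translations in (pi Z)^3.\<close>
definition Reg :: "(real \<times> real \<times> real) set" where
  "Reg = {(a, b, c). sin (2 * b) \<noteq> 0}"

definition piZ_rel :: "(real \<times> real \<times> real) rel" where
  "piZ_rel = {((a, b, c), (a', b', c')). (a, b, c) \<in> Reg \<and> (a', b', c') \<in> Reg \<and>
      (\<exists>k l m :: int. a' - a = of_int k * pi \<and> b' - b = of_int l * pi \<and> c' - c = of_int m * pi)}"

definition torus_reg :: "(real \<times> real \<times> real) set topology" where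
  "torus_reg = quot_top (subtopology euclidean Reg) piZ_rel"

definition pm_rel :: "A2 rel" where
  "pm_rel = {(a, b). a \<in> Uset \<and> b \<in> Uset \<and> (b = a \<or> b = - a)}"

definition U_pm :: "A2 set topology" where
  "U_pm = quot_top (subtopology euclidean Uset) pm_rel"

definition psi :: "real \<times> real \<times> real \<Rightarrow> A2" where
  "psi = (\<lambda>(a, b, c). A2mult (A2mult (A2exp (a *\<^sub>R e1)) (A2exp (b *\<^sub>R e12))) (A2exp (c *\<^sub>R e1)))"

definition Psi :: "(real \<times> real \<times> real) set \<Rightarrow> A2 set" where
  "Psi C = pm_rel `` (psi ` C)"

end

theory Submission
  imports Defs "HOL-Homology.Invariance_of_Domain"
begin

text \<open>
  In coordinates, \<open>\<psi>(\<alpha>, \<beta>, \<gamma>) = exp(\<alpha> e\<^sub>1) exp(\<beta> e\<^sub>1e\<^sub>2) exp(\<gamma> e\<^sub>1)\<close> has the pairs of components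
  \<open>cos \<beta> (cos(\<alpha>+\<gamma>), sin(\<alpha>+\<gamma>))\<close> on \<open>1, e\<^sub>1\<close> and \<open>sin \<beta> (cos(\<gamma>-\<alpha>), sin(\<gamma>-\<alpha>))\<close> on
  \<open>e\<^sub>1e\<^sub>2, e\<^sub>2\<close>. Comparing these polar forms shows that \<open>\<psi> y = \<plusminus>\<psi> x\<close> iff \<open>y\<close> is congruent
  modulo \<open>(\<pi>\<int>)\<^sup>3\<close> to \<open>x\<close> or to \<open>(\<alpha> + \<pi>/2, -\<beta>, \<gamma> + \<pi>/2)\<close>, which gives the two-point fibres.
  Hence \<open>\<psi>\<close> is injective on balls of radius \<open>\<pi>/4\<close>, and invariance of domain (applied to the
  cone over the unit sphere of \<open>\<real>\<^sup>4\<close>) makes it an open map. So \<open>\<Psi>\<close> is continuous and open,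
  injective on the image of such a ball, and that image together with its translate under
  \<open>(\<alpha>, \<beta>, \<gamma>) \<mapsto> (\<alpha> + \<pi>/2, -\<beta>, \<gamma> + \<pi>/2)\<close> evenly covers its image.
\<close>

lemma polar_norm_sq: "(r * cos t)^2 + (r * sin t)^2 = (r::real)^2"
  by (simp add: power_mult_distrib flip: distrib_left)

lemma cos_add_int_pi: "cos (x + of_int n * pi) = (if even n then cos x else - cos x)"
  and sin_add_int_pi: "sin (x + of_int n * pi) = (if even n then sin x else - sin x)"
  by (auto simp: cos_add sin_add mult.commute)

lemma polar_eq_imp:
  fixes r s \<theta> \<phi> :: real
  assumes "r \<noteq> 0" and cos: "s * cos \<phi> = r * cos \<theta>" and sin: "s * sin \<phi> = r * sin \<theta>"
  shows "\<exists>n::int. \<phi> = \<theta> + of_int n * pi \<and> s = (if even n then r else - r)"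
proof -
  have "s^2 = r^2"
    using polar_norm_sq[of s \<phi>] polar_norm_sq[of r \<theta>] cos sin by simp
  then consider "s = r" | "s = - r"
    by (metis power2_eq_iff)
  then show ?thesis
  proof cases
    case 1
    then have "sin \<phi> = sin \<theta> \<and> cos \<phi> = cos \<theta>"
      using assms by simp
    then obtain n :: int where "\<phi> = \<theta> + 2 * pi * n"
      by (auto simp: sin_cos_eq_iff)
    with 1 show ?thesis
      by (intro exI[of _ "2 * n"]) auto
  next
    case 2
    then have "r * sin \<phi> = r * sin (\<theta> + pi) \<and> r * cos \<phi> = r * cos (\<theta> + pi)"
      using cos sin by simp
    then have "sin \<phi> = sin (\<theta> + pi) \<and> cos \<phi> = cos (\<theta> + pi)"
      using \<open>r \<noteq> 0\<close> by (metis mult_cancel_left)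
    then obtain n :: int where "\<phi> = \<theta> + pi + 2 * pi * n"
      using sin_cos_eq_iff by blast
    with 2 show ?thesis
      by (intro exI[of _ "2 * n + 1"]) (auto simp: algebra_simps)
  qed
qed

lemma int_mult_pi_eq:
  fixes p q i d :: int
  assumes "p + q = 2 * i + d"
  shows "of_int p * pi + of_int q * pi = 2 * (of_int i * pi) + of_int d * pi"
proof -
  have "real_of_int p + of_int q = 2 * of_int i + of_int d"
    using arg_cong[where f = real_of_int, OF assms] by simp
  then show ?thesis
    by (metis distrib_right mult.assoc)
qed

lemma sum_diff_int_pi_cases:
  fixes a c a' c' :: real
  assumes "a' + c' = a + c + of_int p * pi" and "c' - a' = c - a + of_int q * pi"
  obtains i j :: int where "even (p + q)" "a' = a + of_int j * pi" "c' = c + of_int i * pi"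
  | i j :: int where "odd (p + q)" "a' = a + pi / 2 + of_int j * pi" "c' = c + pi / 2 + of_int i * pi"
proof (cases "even (p + q)")
  case True
  then obtain i j where "p + q = 2 * i + 0" "p + - q = 2 * j + 0"
    by (metis evenE even_diff even_add add_0_right diff_conv_add_uminus)
  then have "a' = a + of_int j * pi" "c' = c + of_int i * pi"
    using assms int_mult_pi_eq[of p q i 0] int_mult_pi_eq[of p "- q" j 0] by simp_all
  then show ?thesis
    by (rule that(1)[OF True])
next
  case False
  then obtain i j where "p + q = 2 * i + 1" "p + - q = 2 * j + 1"
    by (metis oddE even_diff even_add diff_conv_add_uminus)
  then have "a' = a + pi / 2 + of_int j * pi" "c' = c + pi / 2 + of_int i * pi"
    using assms int_mult_pi_eq[of p q i 1] int_mult_pi_eq[of p "- q" j 1] by simp_all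
  then show ?thesis
    by (rule that(2)[OF False])
qed

section \<open>Quotient topologies and open maps\<close>

lemma quotient_eq_image: "A // r = (\<lambda>x. r `` {x}) ` A"
  by (auto simp: quotient_def)

lemma openin_quot_top:
  assumes "equiv (topspace X) r"
  shows "openin (quot_top X r) W \<longleftrightarrow> W \<subseteq> topspace X // r \<and> openin X (\<Union>W)"
proof -
  have "\<Union>(S \<inter> T) = \<Union>S \<inter> \<Union>T" if "S \<subseteq> topspace X // r" "T \<subseteq> topspace X // r" for S T
    using quotient_disj[OF assms] that by blast
  moreover have "\<Union>(\<Union>K) = \<Union>(Union ` K)" for K :: "'a set set set"
    by blast
  ultimately have "istopology (\<lambda>W. W \<subseteq> topspace X // r \<and> openin X (\<Union>W))"
    unfolding istopology_def by (auto simp del: Union_Int_subset)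
  then show ?thesis
    by (simp add: quot_top_def)
qed

lemma topspace_quot_top:
  assumes "equiv (topspace X) r"
  shows "topspace (quot_top X r) = topspace X // r"
proof -
  have "openin (quot_top X r) (topspace X // r)"
    using openin_quot_top[OF assms] Union_quotient[OF assms] by auto
  then show ?thesis
    using openin_quot_top[OF assms] openin_subset openin_topspace by blast
qed

lemma quotient_map_quot_top:
  assumes "equiv (topspace X) r"
  shows "quotient_map X (quot_top X r) (\<lambda>x. r `` {x})"
  unfolding quotient_map_def
proof (intro conjI allI impI)
  show "(\<lambda>x. r `` {x}) ` topspace X = topspace (quot_top X r)"
    by (simp add: topspace_quot_top[OF assms] quotient_eq_image)
next
  fix U
  assume "U \<subseteq> topspace (quot_top X r)"
  then have U: "U \<subseteq> topspace X // r"
    by (simp add: topspace_quot_top[OF assms])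
  have "{x \<in> topspace X. r `` {x} \<in> U} = \<Union>U"
  proof
    show "\<Union>U \<subseteq> {x \<in> topspace X. r `` {x} \<in> U}"
    proof
      fix y
      assume "y \<in> \<Union>U"
      then obtain x where "x \<in> topspace X" "r `` {x} \<in> U" "(x, y) \<in> r"
        using U by (force elim!: quotientE)
      then show "y \<in> {x \<in> topspace X. r `` {x} \<in> U}"
        using equiv_class_eq[OF assms] equiv_type[OF assms] by auto
    qed
  qed (use equiv_class_self[OF assms] in blast)
  then show "openin X {x \<in> topspace X. r `` {x} \<in> U} \<longleftrightarrow> openin (quot_top X r) U"
    by (simp add: openin_quot_top[OF assms] U)
qed

lemma open_map_quot_top:
  assumes "equiv (topspace X) r" and "\<And>U. openin X U \<Longrightarrow> openin X (r `` U)"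
  shows "open_map X (quot_top X r) (\<lambda>x. r `` {x})"
  unfolding open_map_def
proof (intro allI impI)
  fix U
  assume "openin X U"
  moreover have "\<Union>((\<lambda>x. r `` {x}) ` U) = r `` U"
    by blast
  ultimately show "openin (quot_top X r) ((\<lambda>x. r `` {x}) ` U)"
    using assms openin_subset by (force simp: openin_quot_top quotientI)
qed

lemma homeomorphic_map_open_injective_restriction:
  assumes "continuous_map X Y f" "open_map X Y f" "openin X U" "inj_on f U"
  shows "homeomorphic_map (subtopology X U) (subtopology Y (f ` U)) f"
proof (rule bijective_open_imp_homeomorphic_map)
  have "U \<subseteq> topspace X" "f ` U \<subseteq> topspace Y"
    using assms openin_subset continuous_map_image_subset_topspace by fastforce+
  then show "f ` topspace (subtopology X U) = topspace (subtopology Y (f ` U))"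
    "inj_on f (topspace (subtopology X U))"
    using assms(4) by (auto simp: Int_absorb1)
  show "continuous_map (subtopology X U) (subtopology Y (f ` U)) f"
    using assms(1) by (auto intro: continuous_map_from_subtopology simp: continuous_map_in_subtopology)
  show "open_map (subtopology X U) (subtopology Y (f ` U)) f"
    using assms(2,3) by (auto intro: open_map_into_subtopology open_map_from_subtopology)
qed

lemma openin_sphere_injective_image:
  fixes f :: "'a::euclidean_space \<Rightarrow> 'b::euclidean_space"
  assumes "open S" "continuous_on S f" "inj_on f S" "f ` S \<subseteq> sphere 0 1"
    and "DIM('b) \<le> Suc DIM('a)"
  shows "openin (top_of_set (sphere 0 1)) (f ` S)"
proof -
  \<comment> \<open>The cone over \<open>f\<close> is injective on \<open>S \<times> {0<..}\<close>, of dimension \<open>DIM('a) + 1\<close>.\<close>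
  define h where "h z = snd z *\<^sub>R f (fst z)" for z :: "'a \<times> real"
  have norm_h: "norm (h z) = snd z" if "z \<in> S \<times> {0::real<..}" for z
    using that assms(4) by (auto simp: h_def)
  have "open (h ` (S \<times> {0::real<..}))"
  proof (rule invariance_of_domain_gen)
    show "open (S \<times> {0::real<..})"
      by (intro open_Times assms(1) open_greaterThan)
    show "continuous_on (S \<times> {0::real<..}) h"
      unfolding h_def
      by (intro continuous_intros continuous_on_compose2[OF assms(2)]) auto
    show "inj_on h (S \<times> {0::real<..})"
    proof (rule inj_onI)
      fix z w
      assume z: "z \<in> S \<times> {0::real<..}" and w: "w \<in> S \<times> {0::real<..}" and "h z = h w"
      then have "snd z = snd w"
        using norm_h[OF z] norm_h[OF w] by simp
      with \<open>h z = h w\<close> z have "f (fst z) = f (fst w)"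
        by (auto simp: h_def)
      with z w have "fst z = fst w"
        using assms(3) by (auto dest: inj_onD)
      with \<open>snd z = snd w\<close> show "z = w"
        by (simp add: prod_eq_iff)
    qed
  qed (use assms(5) in simp)
  moreover have "f ` S = sphere 0 1 \<inter> h ` (S \<times> {0::real<..})"
  proof
    have "f x = h (x, 1)" for x
      by (simp add: h_def)
    then show "f ` S \<subseteq> sphere 0 1 \<inter> h ` (S \<times> {0::real<..})"
      using assms(4) by fastforce
    show "sphere 0 1 \<inter> h ` (S \<times> {0::real<..}) \<subseteq> f ` S"
    proof
      fix y
      assume "y \<in> sphere 0 1 \<inter> h ` (S \<times> {0::real<..})"
      then obtain z where "z \<in> S \<times> {0<..}" "y = h z" "norm y = 1"
        by auto
      then show "y \<in> f ` S"
        using norm_h by (auto simp: h_def)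
    qed
  qed
  ultimately show ?thesis
    by (auto simp: openin_open)
qed

lemma open_map_locally_injective_into_sphere:
  fixes f :: "'a::euclidean_space \<Rightarrow> 'b::euclidean_space"
  assumes "open S" "continuous_on S f" "f ` S \<subseteq> sphere 0 1"
    and "DIM('b) \<le> Suc DIM('a)"
    and "\<And>x. x \<in> S \<Longrightarrow> \<exists>T. open T \<and> x \<in> T \<and> inj_on f (S \<inter> T)"
  shows "open_map (top_of_set S) (top_of_set (sphere 0 1)) f"
  unfolding open_map_def
proof (intro allI impI)
  fix U
  assume "openin (top_of_set S) U"
  then have "open U" "U \<subseteq> S"
    using assms(1) openin_open_eq by blast+
  show "openin (top_of_set (sphere 0 1)) (f ` U)"
  proof (subst openin_subopen, clarify)
    fix x
    assume "x \<in> U"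
    then obtain T where "open T" "x \<in> T" "inj_on f (S \<inter> T)"
      using assms(5) \<open>U \<subseteq> S\<close> by blast
    then have "openin (top_of_set (sphere 0 1)) (f ` (U \<inter> T))"
      using assms \<open>open U\<close> \<open>U \<subseteq> S\<close>
      by (intro openin_sphere_injective_image)
         (auto intro: continuous_on_subset inj_on_subset)
    then show "\<exists>V. openin (top_of_set (sphere 0 1)) V \<and> f x \<in> V \<and> V \<subseteq> f ` U"
      using \<open>x \<in> U\<close> \<open>x \<in> T\<close> by blast
  qed
qed

section \<open>Coordinates in the algebra\<close>

lemma vector_4_nth [simp]:
  "(vector [x, y, z, w] :: 'a::zero^4) $ 1 = x"
  "(vector [x, y, z, w] :: 'a::zero^4) $ 2 = y"
  "(vector [x, y, z, w] :: 'a::zero^4) $ 3 = z"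
  "(vector [x, y, z, w] :: 'a::zero^4) $ 4 = w"
  unfolding vector_def by simp_all

lemma vec4_eq_iff: "(x::'a^4) = y \<longleftrightarrow> x$1 = y$1 \<and> x$2 = y$2 \<and> x$3 = y$3 \<and> x$4 = y$4"
  by (simp add: vec_eq_iff forall_4)

lemma A2mult_nth [simp]:
  "A2mult x y $ 1 = x$1*y$1 - x$2*y$2 - x$3*y$3 - x$4*y$4"
  "A2mult x y $ 2 = x$1*y$2 + x$2*y$1 + x$3*y$4 - x$4*y$3"
  "A2mult x y $ 3 = x$1*y$3 - x$2*y$4 + x$3*y$1 + x$4*y$2"
  "A2mult x y $ 4 = x$1*y$4 + x$2*y$3 - x$3*y$2 + x$4*y$1"
  by (simp_all add: A2mult_def)

lemma A2_basis_nth [simp]: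
  "A2one$1 = 1" "A2one$2 = 0" "A2one$3 = 0" "A2one$4 = 0"
  "e1$1 = 0" "e1$2 = 1" "e1$3 = 0" "e1$4 = 0"
  "e2$1 = 0" "e2$2 = 0" "e2$3 = 1" "e2$4 = 0"
  "e12$1 = 0" "e12$2 = 0" "e12$3 = 0" "e12$4 = 1"
  by (simp_all add: A2one_def e1_def e2_def e12_def)

lemma norm_vec4: "norm (u::real^4) = sqrt (u$1^2 + u$2^2 + u$3^2 + u$4^2)"
  by (simp add: norm_eq_sqrt_inner inner_vec_def sum_4 power2_eq_square)

lemma A2pow_scaleR_imaginary_unit:
  assumes "A2mult v v = - A2one" and "A2mult v A2one = v"
  shows "A2pow (t *\<^sub>R v) m
    = (fact m * cos_coeff m * t^m) *\<^sub>R A2one + (fact m * sin_coeff m * t^m) *\<^sub>R v"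
proof (induction m)
  case (Suc m)
  have coeffs: "fact (Suc m) * cos_coeff (Suc m) * t ^ Suc m = - (t * (fact m * sin_coeff m * t ^ m))"
       "fact (Suc m) * sin_coeff (Suc m) * t ^ Suc m = t * (fact m * cos_coeff m * t ^ m)"
    by (simp_all add: cos_coeff_Suc sin_coeff_Suc)
  have "A2pow (t *\<^sub>R v) (Suc m) = A2mult (t *\<^sub>R v)
      ((fact m * cos_coeff m * t^m) *\<^sub>R A2one + (fact m * sin_coeff m * t^m) *\<^sub>R v)"
    using Suc by simp
  also have "\<dots> = (t * (fact m * cos_coeff m * t^m)) *\<^sub>R A2mult v A2one
      + (t * (fact m * sin_coeff m * t^m)) *\<^sub>R A2mult v v"
    by (simp add: vec4_eq_iff algebra_simps)
  finally show ?case
    unfolding coeffs by (simp add: assms)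
qed (simp add: cos_coeff_def sin_coeff_def)

lemma A2exp_scaleR_imaginary_unit:
  assumes "A2mult v v = - A2one" and "A2mult v A2one = v"
  shows "A2exp (t *\<^sub>R v) = cos t *\<^sub>R A2one + sin t *\<^sub>R v"
proof -
  have "(\<lambda>m. (1 / fact m) *\<^sub>R A2pow (t *\<^sub>R v) m)
      = (\<lambda>m. (cos_coeff m * t^m) *\<^sub>R A2one + (sin_coeff m * t^m) *\<^sub>R v)"
    by (simp add: A2pow_scaleR_imaginary_unit[OF assms] scaleR_add_right fun_eq_iff)
  moreover have "\<dots> sums (cos t *\<^sub>R A2one + sin t *\<^sub>R v)"
    using cos_converges[of t] sin_converges[of t] by (intro sums_add sums_scaleR_left) auto
  ultimately show ?thesis
    unfolding A2exp_def by (simp add: sums_iff)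
qed

lemma psi_explicit:
  "psi (a, b, c) = vector [cos b * cos (a + c), cos b * sin (a + c),
                           sin b * sin (c - a), sin b * cos (c - a)]"
proof -
  have "A2mult e1 e1 = - A2one" "A2mult e1 A2one = e1"
       "A2mult e12 e12 = - A2one" "A2mult e12 A2one = e12"
    by (simp_all add: vec4_eq_iff)
  then show ?thesis
    unfolding psi_def
    by (simp add: A2exp_scaleR_imaginary_unit vec4_eq_iff cos_add sin_add cos_diff sin_diff
        algebra_simps)
qed

lemma psi_nth [simp]:
  "psi (a, b, c) $ 1 = cos b * cos (a + c)" "psi (a, b, c) $ 2 = cos b * sin (a + c)"
  "psi (a, b, c) $ 3 = sin b * sin (c - a)" "psi (a, b, c) $ 4 = sin b * cos (c - a)"
  by (simp_all add: psi_explicit)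

lemma Uset_iff:
  "u \<in> Uset \<longleftrightarrow> norm u = 1 \<and> (u$1 \<noteq> 0 \<or> u$2 \<noteq> 0) \<and> (u$3 \<noteq> 0 \<or> u$4 \<noteq> 0)"
proof -
  have "u \<in> A1 \<longleftrightarrow> u$3 = 0 \<and> u$4 = 0" "u \<in> A1e2 \<longleftrightarrow> u$1 = 0 \<and> u$2 = 0"
    by (auto simp: A1_def A1e2_def vec4_eq_iff intro: exI[of _ "u$1"] exI[of _ "u$3"])
  then show ?thesis
    by (auto simp: Uset_def)
qed

lemma uminus_Uset: "u \<in> Uset \<Longrightarrow> - u \<in> Uset"
  by (simp add: Uset_iff)

lemma Uset_subset_sphere: "Uset \<subseteq> sphere 0 1"
  by (auto simp: Uset_iff)

section \<open>The fibres of psi\<close>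

definition piZ3 :: "int \<Rightarrow> int \<Rightarrow> int \<Rightarrow> real \<times> real \<times> real" where
  "piZ3 k l m = (of_int k * pi, of_int l * pi, of_int m * pi)"

definition deck :: "real \<times> real \<times> real \<Rightarrow> real \<times> real \<times> real" where
  "deck = (\<lambda>(a, b, c). (a + pi / 2, - b, c + pi / 2))"

lemma psi_add_piZ3: "psi (piZ3 k l m + x) = (if even (k + l + m) then psi x else - psi x)"
proof -
  obtain a b c where x: "x = (a, b, c)"
    by (cases x)
  have shift: "piZ3 k l m + (a, b, c) = (a + of_int k * pi, b + of_int l * pi, c + of_int m * pi)"
    by (simp add: piZ3_def)
  have angles: "a + of_int k * pi + (c + of_int m * pi) = (a + c) + of_int (k + m) * pi"
    "c + of_int m * pi - (a + of_int k * pi) = (c - a) + of_int (m - k) * pi"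
    by (simp_all add: algebra_simps)
  show ?thesis
    by (simp only: shift x vec4_eq_iff psi_nth angles cos_add_int_pi sin_add_int_pi) auto
qed

lemma psi_deck: "psi (deck x) = - psi x"
proof -
  obtain a b c where x: "x = (a, b, c)"
    by (cases x)
  have "a + pi / 2 + (c + pi / 2) = (a + c) + pi" "c + pi / 2 - (a + pi / 2) = c - a"
    by (simp_all add: algebra_simps)
  then show ?thesis
    by (simp add: x deck_def vec4_eq_iff)
qed

lemma psi_eq_scaleR_polar:
  assumes "psi (a', b', c') = e *\<^sub>R psi (a, b, c)" and "e \<noteq> 0" "sin b \<noteq> 0" "cos b \<noteq> 0"
  obtains p q :: int
  where "a' + c' = a + c + of_int p * pi" "cos b' = (if even p then e * cos b else - (e * cos b))"
    and "c' - a' = c - a + of_int q * pi" "sin b' = (if even q then e * sin b else - (e * sin b))"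
proof -
  have "cos b' * cos (a' + c') = (e * cos b) * cos (a + c)"
       "cos b' * sin (a' + c') = (e * cos b) * sin (a + c)"
       "sin b' * cos (c' - a') = (e * sin b) * cos (c - a)"
       "sin b' * sin (c' - a') = (e * sin b) * sin (c - a)"
    using assms(1) by (simp_all add: vec4_eq_iff)
  then show ?thesis
    using assms(2-4) that polar_eq_imp[of "e * cos b" "cos b'" "a' + c'" "a + c"]
          polar_eq_imp[of "e * sin b" "sin b'" "c' - a'" "c - a"] by auto
qed

lemma psi_eq_pm_imp:
  assumes "x \<in> Reg" and "psi y = psi x \<or> psi y = - psi x"
  shows "\<exists>k l m. y = piZ3 k l m + x \<or> y = piZ3 k l m + deck x"
proof -
  obtain a b c a' b' c' where x: "x = (a, b, c)" and y: "y = (a', b', c')"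
    by (cases x, cases y)
  obtain e :: real where "e \<noteq> 0" and e: "psi y = e *\<^sub>R psi x"
    using assms(2) by (metis scaleR_one scaleR_minus1_left zero_neq_one neg_equal_0_iff_equal)
  have "sin b \<noteq> 0" "cos b \<noteq> 0"
    using assms(1) by (auto simp: x Reg_def sin_double)
  with e \<open>e \<noteq> 0\<close> obtain p q :: int
    where p: "a' + c' = a + c + of_int p * pi"
      and cos_b': "cos b' = (if even p then e * cos b else - (e * cos b))"
      and q: "c' - a' = c - a + of_int q * pi"
      and sin_b': "sin b' = (if even q then e * sin b else - (e * sin b))"
    unfolding x y by (rule psi_eq_scaleR_polar)
  define \<sigma> where "\<sigma> = (if even p then e else - e)"
  have "\<sigma> \<noteq> 0" and cos_\<sigma>: "1 * cos b' = \<sigma> * cos b"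
    using \<open>e \<noteq> 0\<close> cos_b' by (auto simp: \<sigma>_def)
  have sin_\<sigma>: "1 * sin b' = (if even (p + q) then \<sigma> * sin b else \<sigma> * sin (- b))"
    using sin_b' by (auto simp: \<sigma>_def)
  from p q show ?thesis
  proof (cases rule: sum_diff_int_pi_cases)
    case (1 i j)
    moreover obtain n :: int where "b' = b + of_int n * pi"
      using polar_eq_imp[of \<sigma> 1 b' b] \<open>\<sigma> \<noteq> 0\<close> cos_\<sigma> sin_\<sigma> 1 by auto
    ultimately have "y = piZ3 j n i + x"
      by (simp add: x y piZ3_def)
    then show ?thesis
      by blast
  next
    case (2 i j)
    moreover obtain n :: int where "b' = - b + of_int n * pi"
      using polar_eq_imp[of \<sigma> 1 b' "- b"] \<open>\<sigma> \<noteq> 0\<close> cos_\<sigma> sin_\<sigma> 2 by auto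
    ultimately have "y = piZ3 j n i + deck x"
      by (simp add: x y piZ3_def deck_def)
    then show ?thesis
      by blast
  qed
qed

lemma psi_in_Uset: "x \<in> Reg \<Longrightarrow> psi x \<in> Uset"
proof -
  assume "x \<in> Reg"
  then obtain a b c where x: "x = (a, b, c)" and "sin b \<noteq> 0" "cos b \<noteq> 0"
    by (cases x) (auto simp: Reg_def sin_double)
  have "(psi x $ 1)^2 + (psi x $ 2)^2 + (psi x $ 3)^2 + (psi x $ 4)^2 = 1"
    using polar_norm_sq[of "cos b" "a + c"] polar_norm_sq[of "sin b" "c - a"]
    by (simp add: x) (use sin_cos_squared_add[of b] in linarith)
  then have "norm (psi x) = 1"
    by (simp add: norm_vec4)
  moreover have "cos t \<noteq> 0 \<or> sin t \<noteq> 0" for t :: real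
    by (metis sin_zero_norm_cos_one norm_zero zero_neq_one)
  ultimately show ?thesis
    using \<open>sin b \<noteq> 0\<close> \<open>cos b \<noteq> 0\<close> by (auto simp: x Uset_iff)
qed

lemma psi_surj_Uset:
  assumes "u \<in> Uset"
  obtains x where "x \<in> Reg" "psi x = u"
proof -
  obtain r \<theta> where r: "u$1 = r * cos \<theta>" "u$2 = r * sin \<theta>"
    using polar_Ex by blast
  obtain s \<phi> where s: "u$4 = s * cos \<phi>" "u$3 = s * sin \<phi>"
    using polar_Ex by blast
  have "u$1^2 + u$2^2 + u$3^2 + u$4^2 = 1"
    using assms by (simp add: Uset_iff norm_vec4)
  then have "r^2 + s^2 = 1"
    using r s polar_norm_sq[of r \<theta>] polar_norm_sq[of s \<phi>] by simp
  then obtain b where b: "r = cos b" "s = sin b"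
    by (metis sincos_total_2pi)
  have "r \<noteq> 0" "s \<noteq> 0"
    using assms r s by (auto simp: Uset_iff)
  with b have "((\<theta> - \<phi>) / 2, b, (\<theta> + \<phi>) / 2) \<in> Reg"
    by (simp add: Reg_def sin_double)
  moreover have "psi ((\<theta> - \<phi>) / 2, b, (\<theta> + \<phi>) / 2) = u"
    using r s b by (simp add: vec4_eq_iff field_simps)
  ultimately show ?thesis
    using that by blast
qed

lemma continuous_on_psi: "continuous_on S psi"
proof -
  have psi_basis: "psi = (\<lambda>x. (cos (fst (snd x)) * cos (fst x + snd (snd x))) *\<^sub>R A2one
      + (cos (fst (snd x)) * sin (fst x + snd (snd x))) *\<^sub>R e1
      + (sin (fst (snd x)) * sin (snd (snd x) - fst x)) *\<^sub>R e2
      + (sin (fst (snd x)) * cos (snd (snd x) - fst x)) *\<^sub>R e12)"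
    by (auto simp: fun_eq_iff vec4_eq_iff)
  show ?thesis
    unfolding psi_basis by (intro continuous_intros)
qed

lemma open_Reg: "open Reg"
proof -
  have Reg_eq: "Reg = {x. sin (2 * fst (snd x)) \<noteq> 0}"
    by (auto simp: Reg_def)
  show ?thesis
    unfolding Reg_eq by (intro open_Collect_neq continuous_intros)
qed

lemma piZ3_add_in_Reg:
  assumes "x \<in> Reg"
  shows "piZ3 k l m + x \<in> Reg"
proof -
  have "sin (2 * (of_int l * pi + b)) = sin (2 * b)" for b
  proof -
    have "2 * (of_int l * pi + b) = 2 * b + of_int (2 * l) * pi"
      by (simp add: algebra_simps)
    then show ?thesis
      by (simp only: sin_add_int_pi) simp
  qed
  then show ?thesis
    using assms by (cases x) (simp add: Reg_def piZ3_def)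
qed

lemma deck_in_Reg: "x \<in> Reg \<Longrightarrow> deck x \<in> Reg"
  by (cases x) (simp add: Reg_def deck_def)

lemma norm_piZ3_ge:
  assumes "piZ3 k l m \<noteq> 0"
  shows "pi \<le> norm (piZ3 k l m)"
proof -
  have "pi \<le> norm (of_int n * pi)" if "n \<noteq> 0" for n :: int
    using that by (simp add: abs_mult)
  moreover have "norm (of_int k * pi) \<le> norm (piZ3 k l m)"
    "norm (of_int l * pi) \<le> norm (piZ3 k l m)" "norm (of_int m * pi) \<le> norm (piZ3 k l m)"
    unfolding piZ3_def by (meson norm_fst_le norm_snd_le order.trans)+
  moreover have "k \<noteq> 0 \<or> l \<noteq> 0 \<or> m \<noteq> 0"
    using assms by (auto simp: piZ3_def zero_prod_def)
  ultimately show ?thesis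
    by (meson order.trans)
qed

lemma dist_add_piZ3_deck_ge: "pi / 2 \<le> dist x (piZ3 k l m + deck x)"
proof -
  have "pi / 2 \<le> \<bar>pi / 2 + of_int k * pi\<bar>"
  proof (cases "k \<ge> 0")
    case False
    then have "of_int k \<le> (-1::real)"
      by simp
    then have "of_int k * pi \<le> - pi"
      using mult_right_mono[of "of_int k" "-1" pi] by simp
    then show ?thesis
      by linarith
  qed simp
  also have "\<dots> = dist (fst x) (fst (piZ3 k l m + deck x))"
    by (cases x) (simp add: piZ3_def deck_def dist_real_def)
  also have "\<dots> \<le> dist x (piZ3 k l m + deck x)"
    by (rule dist_fst_le)
  finally show ?thesis .
qed

lemma dist_deck: "dist (deck x) (deck y) = dist x y"
  by (cases x, cases y) (simp add: deck_def dist_Pair_Pair dist_real_def abs_minus_commute)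

lemma deck_ball: "deck ` ball x r = ball (deck x) r"
proof
  show "deck ` ball x r \<subseteq> ball (deck x) r"
    by (auto simp: dist_deck)
  show "ball (deck x) r \<subseteq> deck ` ball x r"
  proof
    fix y
    assume y: "y \<in> ball (deck x) r"
    define z where "z = (fst y - pi / 2, - fst (snd y), snd (snd y) - pi / 2)"
    have "y = deck z"
      by (simp add: z_def deck_def)
    moreover have "z \<in> ball x r"
      using y dist_deck[of x z] \<open>y = deck z\<close> by simp
    ultimately show "y \<in> deck ` ball x r"
      by blast
  qed
qed

lemma piZ_rel_iff: "(x, y) \<in> piZ_rel \<longleftrightarrow> x \<in> Reg \<and> (\<exists>k l m. y = piZ3 k l m + x)"
proof -
  obtain a b c a' b' c' where x: "x = (a, b, c)" and y: "y = (a', b', c')"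
    by (cases x, cases y)
  have shift: "y = piZ3 k l m + x \<longleftrightarrow>
      a' - a = of_int k * pi \<and> b' - b = of_int l * pi \<and> c' - c = of_int m * pi" for k l m
    by (auto simp: x y piZ3_def eq_diff_eq)
  have "(x, y) \<in> piZ_rel \<longleftrightarrow> x \<in> Reg \<and> y \<in> Reg \<and> (\<exists>k l m. y = piZ3 k l m + x)"
    unfolding shift by (simp add: piZ_rel_def x y)
  then show ?thesis
    using piZ3_add_in_Reg by blast
qed

lemma equiv_piZ_rel: "equiv Reg piZ_rel"
proof (rule equivI)
  have "x = piZ3 0 0 0 + x" "piZ3 k' l' m' + (piZ3 k l m + x) = piZ3 (k + k') (l + l') (m + m') + x"
    "x = piZ3 (- k) (- l) (- m) + (piZ3 k l m + x)" for k l m k' l' m' and x :: "real \<times> real \<times> real"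
    by (simp_all add: piZ3_def zero_prod_def algebra_simps)
  then show "refl_on Reg piZ_rel" "sym piZ_rel" "trans piZ_rel"
    unfolding refl_on_def sym_def trans_def piZ_rel_iff by (metis piZ3_add_in_Reg)+
  show "piZ_rel \<subseteq> Reg \<times> Reg"
    by (auto simp: piZ_rel_def)
qed

lemma equiv_pm_rel: "equiv Uset pm_rel"
  by (rule equivI) (auto simp: pm_rel_def refl_on_def sym_def trans_def uminus_Uset)

lemma pm_rel_Image: "u \<in> Uset \<Longrightarrow> pm_rel `` {u} = {u, - u}"
  by (auto simp: pm_rel_def uminus_Uset)

lemma psi_eq_pm_iff:
  assumes "x \<in> Reg"
  shows "psi y = psi x \<or> psi y = - psi x \<longleftrightarrow> (x, y) \<in> piZ_rel \<or> (deck x, y) \<in> piZ_rel"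
proof
  assume "psi y = psi x \<or> psi y = - psi x"
  then obtain k l m where "y = piZ3 k l m + x \<or> y = piZ3 k l m + deck x"
    using psi_eq_pm_imp[OF assms] by blast
  then show "(x, y) \<in> piZ_rel \<or> (deck x, y) \<in> piZ_rel"
    using assms deck_in_Reg unfolding piZ_rel_iff by blast
next
  have pm: "psi (piZ3 k l m + z) = psi z \<or> psi (piZ3 k l m + z) = - psi z" for k l m z
    by (simp add: psi_add_piZ3)
  assume "(x, y) \<in> piZ_rel \<or> (deck x, y) \<in> piZ_rel"
  then show "psi y = psi x \<or> psi y = - psi x"
    using pm[of _ _ _ x] pm[of _ _ _ "deck x"] unfolding piZ_rel_iff psi_deck by force
qed

lemma piZ_rel_dist_imp_eq:
  assumes "(x, y) \<in> piZ_rel" and "dist x y < pi"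
  shows "y = x"
proof -
  obtain k l m where y: "y = piZ3 k l m + x"
    using assms(1) by (auto simp: piZ_rel_iff)
  then have "norm (piZ3 k l m) < pi"
    using assms(2) by (simp add: dist_norm)
  then show ?thesis
    using y norm_piZ3_ge by fastforce
qed

lemma deck_piZ_rel_dist_ge:
  assumes "(deck x, y) \<in> piZ_rel"
  shows "pi / 2 \<le> dist x y"
  using assms dist_add_piZ3_deck_ge by (metis piZ_rel_iff)

lemma psi_eq_pm_dist_imp_eq:
  assumes "x \<in> Reg" "dist x y < pi / 2" "psi y = psi x \<or> psi y = - psi x"
  shows "y = x"
proof -
  have "dist x y < pi"
    using assms(2) pi_gt_zero by linarith
  moreover have "(deck x, y) \<notin> piZ_rel"
    using assms(2) deck_piZ_rel_dist_ge by fastforce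
  ultimately show ?thesis
    using assms psi_eq_pm_iff piZ_rel_dist_imp_eq by blast
qed

abbreviation torus_class :: "real \<times> real \<times> real \<Rightarrow> (real \<times> real \<times> real) set" where
  "torus_class x \<equiv> piZ_rel `` {x}"

abbreviation sign_class :: "A2 \<Rightarrow> A2 set" where
  "sign_class u \<equiv> pm_rel `` {u}"

lemma topspace_torus_reg: "topspace torus_reg = Reg // piZ_rel"
  by (simp add: torus_reg_def topspace_quot_top equiv_piZ_rel)

lemma topspace_U_pm: "topspace U_pm = Uset // pm_rel"
  by (simp add: U_pm_def topspace_quot_top equiv_pm_rel)

lemma quotient_map_torus_class: "quotient_map (top_of_set Reg) torus_reg torus_class"
  unfolding torus_reg_def by (rule quotient_map_quot_top) (simp add: equiv_piZ_rel)

lemma quotient_map_sign_class: "quotient_map (top_of_set Uset) U_pm sign_class"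
  unfolding U_pm_def by (rule quotient_map_quot_top) (simp add: equiv_pm_rel)

lemma open_map_torus_class: "open_map (top_of_set Reg) torus_reg torus_class"
  unfolding torus_reg_def
proof (rule open_map_quot_top)
  fix U
  assume "openin (top_of_set Reg) U"
  then have "open U" "U \<subseteq> Reg"
    using open_Reg openin_open_eq by blast+
  then have "piZ_rel `` U = (\<Union>k. \<Union>l. \<Union>m. (\<lambda>x. piZ3 k l m + x) ` U)"
    unfolding Image_def piZ_rel_iff by blast
  moreover have "\<dots> \<subseteq> Reg"
    using \<open>U \<subseteq> Reg\<close> piZ3_add_in_Reg by auto
  ultimately show "openin (top_of_set Reg) (piZ_rel `` U)"
    using \<open>open U\<close> by (auto simp: openin_open_eq open_Reg intro!: open_UN open_translation)
qed (simp add: equiv_piZ_rel)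

lemma open_map_sign_class: "open_map (top_of_set Uset) U_pm sign_class"
  unfolding U_pm_def
proof (rule open_map_quot_top)
  fix P
  assume "openin (top_of_set Uset) P"
  then obtain G where "open G" "P = Uset \<inter> G"
    by (auto simp: openin_open)
  moreover have "uminus ` (Uset \<inter> G) = Uset \<inter> uminus ` G"
    using uminus_Uset by (auto simp: image_iff) (metis minus_minus)
  ultimately have "openin (top_of_set Uset) (uminus ` P)"
    by (simp add: openin_open_Int open_negations)
  moreover have "pm_rel `` P = P \<union> uminus ` P"
    using \<open>P = Uset \<inter> G\<close> by (auto simp: pm_rel_def uminus_Uset)
  ultimately show "openin (top_of_set Uset) (pm_rel `` P)"
    using \<open>openin (top_of_set Uset) P\<close> by auto
qed (simp add: equiv_pm_rel)

lemma continuous_map_psi: "continuous_map (top_of_set Reg) (top_of_set Uset) psi"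
  by (simp add: continuous_map_in_subtopology continuous_on_psi psi_in_Uset)

lemma open_map_psi: "open_map (top_of_set Reg) (top_of_set Uset) psi"
proof -
  have "open_map (top_of_set Reg) (top_of_set (sphere 0 1)) psi"
  proof (rule open_map_locally_injective_into_sphere)
    show "psi ` Reg \<subseteq> sphere 0 1"
      using psi_in_Uset Uset_subset_sphere by blast
    fix x :: "real \<times> real \<times> real"
    have "dist y z < pi / 2" if "y \<in> ball x (pi / 4)" "z \<in> ball x (pi / 4)" for y z
      using that dist_triangle_half_r[of x y "pi / 2" z] by simp
    then have "inj_on psi (Reg \<inter> ball x (pi / 4))"
      by (intro inj_onI) (simp add: psi_eq_pm_dist_imp_eq)
    moreover have "x \<in> ball x (pi / 4)"
      by simp
    ultimately show "\<exists>T. open T \<and> x \<in> T \<and> inj_on psi (Reg \<inter> T)"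
      by blast
  qed (simp_all add: open_Reg continuous_on_psi)
  then have "open_map (top_of_set Reg) (subtopology (top_of_set (sphere 0 1)) Uset) psi"
    using psi_in_Uset by (auto intro: open_map_into_subtopology)
  then show ?thesis
    using Uset_subset_sphere by (simp add: subtopology_subtopology Int_absorb1)
qed

lemma Psi_torus_class:
  assumes "x \<in> Reg"
  shows "Psi (torus_class x) = sign_class (psi x)"
proof -
  have "psi ` torus_class x \<subseteq> {psi x} \<union> {- psi x}" "{psi x} \<subseteq> psi ` torus_class x"
    using psi_eq_pm_iff[OF assms] equiv_class_self[OF equiv_piZ_rel assms] by auto
  then have "sign_class (psi x) \<subseteq> Psi (torus_class x)"
    "Psi (torus_class x) \<subseteq> sign_class (psi x) \<union> sign_class (- psi x)"
    unfolding Psi_def by (auto simp flip: Image_Un dest: Image_mono[OF order_refl])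
  moreover have "sign_class (- psi x) = sign_class (psi x)"
    using psi_in_Uset[OF assms] uminus_Uset by (simp add: pm_rel_Image insert_commute)
  ultimately show ?thesis
    by blast
qed

lemma Psi_torus_class_eq_iff:
  assumes "x \<in> Reg" "y \<in> Reg"
  shows "Psi (torus_class y) = Psi (torus_class x)
    \<longleftrightarrow> torus_class y = torus_class x \<or> torus_class y = torus_class (deck x)"
proof -
  have "Psi (torus_class y) = Psi (torus_class x) \<longleftrightarrow> {psi y, - psi y} = {psi x, - psi x}"
    using assms by (simp add: Psi_torus_class pm_rel_Image psi_in_Uset)
  also have "\<dots> \<longleftrightarrow> psi y = psi x \<or> psi y = - psi x"
    by (metis doubleton_eq_iff minus_minus)
  also have "\<dots> \<longleftrightarrow> (x, y) \<in> piZ_rel \<or> (deck x, y) \<in> piZ_rel"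
    by (rule psi_eq_pm_iff[OF assms(1)])
  also have "\<dots> \<longleftrightarrow> torus_class x = torus_class y \<or> torus_class (deck x) = torus_class y"
    using assms deck_in_Reg[OF assms(1)] by (simp add: eq_equiv_class_iff[OF equiv_piZ_rel])
  finally show ?thesis
    by (simp only: eq_commute)
qed

lemma torus_class_ne_deck:
  assumes "x \<in> Reg" "y \<in> Reg" "dist x y < pi / 2"
  shows "torus_class y \<noteq> torus_class (deck x)"
proof
  assume "torus_class y = torus_class (deck x)"
  then have "(deck x, y) \<in> piZ_rel"
    using assms deck_in_Reg by (simp add: equiv_class_eq_iff[OF equiv_piZ_rel])
  then show False
    using assms(3) deck_piZ_rel_dist_ge by fastforce
qed

lemma Psi_comp_torus_class:
  "x \<in> topspace (top_of_set Reg) \<Longrightarrow> (sign_class \<circ> psi) x = (Psi \<circ> torus_class) x"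
  by (simp add: Psi_torus_class)

lemma continuous_map_Psi: "continuous_map torus_reg U_pm Psi"
proof (rule continuous_compose_quotient_map[OF quotient_map_torus_class])
  show "continuous_map (top_of_set Reg) U_pm (Psi \<circ> torus_class)"
    using continuous_map_compose[OF continuous_map_psi
        quotient_imp_continuous_map[OF quotient_map_sign_class]]
    by (rule continuous_map_eq) (rule Psi_comp_torus_class)
qed

lemma open_map_Psi: "open_map torus_reg U_pm Psi"
proof (rule open_map_from_composition_left)
  show "open_map (top_of_set Reg) U_pm (Psi \<circ> torus_class)"
    using open_map_compose[OF open_map_psi open_map_sign_class]
    by (rule open_map_eq) (rule Psi_comp_torus_class)
  show "continuous_map (top_of_set Reg) torus_reg torus_class"
    by (rule quotient_imp_continuous_map[OF quotient_map_torus_class])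
  show "torus_class ` topspace (top_of_set Reg) = topspace torus_reg"
    by (rule quotient_imp_surjective_map[OF quotient_map_torus_class])
qed

lemma image_psi_Reg: "psi ` Reg = Uset"
proof
  show "Uset \<subseteq> psi ` Reg"
  proof
    fix u
    assume "u \<in> Uset"
    then obtain x where "x \<in> Reg" "psi x = u"
      by (rule psi_surj_Uset)
    then show "u \<in> psi ` Reg"
      by blast
  qed
qed (use psi_in_Uset in blast)

lemma Psi_surj: "Psi ` topspace torus_reg = topspace U_pm"
proof -
  have "(\<lambda>x. Psi (torus_class x)) ` Reg = sign_class ` psi ` Reg"
    by (simp add: Psi_torus_class image_image cong: image_cong)
  then show ?thesis
    by (simp add: topspace_torus_reg topspace_U_pm quotient_eq_image image_image image_psi_Reg)
qed

lemma topspace_U_pmE: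
  assumes "y \<in> topspace U_pm"
  obtains x where "x \<in> Reg" "y = Psi (torus_class x)"
  using assms by (auto simp flip: Psi_surj simp: topspace_torus_reg elim!: quotientE)

lemma Psi_fibre:
  assumes "x \<in> Reg"
  shows "{C \<in> topspace torus_reg. Psi C = Psi (torus_class x)} = {torus_class x, torus_class (deck x)}"
proof -
  have "torus_class ` Reg = Reg // piZ_rel"
    by (simp add: quotient_eq_image)
  then have "{C \<in> topspace torus_reg. Psi C = Psi (torus_class x)}
      = torus_class ` {y \<in> Reg. Psi (torus_class y) = Psi (torus_class x)}"
    unfolding topspace_torus_reg by (auto simp flip: \<open>torus_class ` Reg = Reg // piZ_rel\<close>)
  also have "\<dots> = torus_class ` {y \<in> Reg. torus_class y = torus_class x \<or> torus_class y = torus_class (deck x)}"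
    using Psi_torus_class_eq_iff[OF assms] by blast
  also have "\<dots> = {torus_class x, torus_class (deck x)}"
    using assms deck_in_Reg by blast
  finally show ?thesis .
qed

lemma card_Psi_fibre:
  assumes "x \<in> Reg"
  shows "card {C \<in> topspace torus_reg. Psi C = Psi (torus_class x)} = 2"
  using Psi_fibre[OF assms] torus_class_ne_deck[OF assms assms] by simp

section \<open>Evenly covered neighbourhoods\<close>

lemma homeomorphic_map_Psi_ball:
  assumes "ball x r \<subseteq> Reg" and "r \<le> pi / 4"
  shows "openin torus_reg (torus_class ` ball x r)"
    and "homeomorphic_map (subtopology torus_reg (torus_class ` ball x r))
           (subtopology U_pm (Psi ` torus_class ` ball x r)) Psi"
proof -
  show open_B: "openin torus_reg (torus_class ` ball x r)"
    using open_map_torus_class assms(1) by (simp add: open_map_def openin_open_eq open_Reg)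
  have "inj_on Psi (torus_class ` ball x r)"
  proof (rule inj_onI, clarify)
    fix y z
    assume yz: "y \<in> ball x r" "z \<in> ball x r"
      and "Psi (torus_class y) = Psi (torus_class z)"
    moreover have "dist y z < pi / 2"
      using yz assms(2) dist_triangle_half_r[of x y "pi / 2" z] by simp
    moreover have "y \<in> Reg" "z \<in> Reg"
      using yz assms(1) by auto
    ultimately show "torus_class y = torus_class z"
      using Psi_torus_class_eq_iff[of y z] torus_class_ne_deck[of y z] by auto
  qed
  then show "homeomorphic_map (subtopology torus_reg (torus_class ` ball x r))
      (subtopology U_pm (Psi ` torus_class ` ball x r)) Psi"
    using homeomorphic_map_open_injective_restriction continuous_map_Psi open_map_Psi open_B
    by blast
qed

lemma Psi_image_deck_ball:
  assumes "ball x r \<subseteq> Reg"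
  shows "Psi ` torus_class ` ball (deck x) r = Psi ` torus_class ` ball x r"
proof -
  have "Psi (torus_class (deck y)) = Psi (torus_class y)" if "y \<in> ball x r" for y
    using that assms deck_in_Reg Psi_torus_class_eq_iff[of y "deck y"] by blast
  then show ?thesis
    unfolding deck_ball[symmetric] image_image by (rule image_cong[OF refl])
qed

lemma disjnt_torus_class_deck_ball:
  assumes "ball x r \<subseteq> Reg" and "r \<le> pi / 4"
  shows "disjnt (torus_class ` ball x r) (torus_class ` ball (deck x) r)"
proof -
  have "torus_class z \<noteq> torus_class (deck w)" if "z \<in> ball x r" "w \<in> ball x r" for z w
  proof -
    have "dist w z < pi / 2"
      using that assms(2) dist_triangle_half_r[of x w "pi / 2" z] by simp
    moreover have "w \<in> Reg" "z \<in> Reg"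
      using that assms(1) by auto
    ultimately show ?thesis
      using torus_class_ne_deck[of w z] by blast
  qed
  then show ?thesis
    by (auto simp: disjnt_def simp flip: deck_ball)
qed

lemma Psi_preimage_ball:
  assumes "ball x r \<subseteq> Reg"
  shows "{C \<in> topspace torus_reg. Psi C \<in> Psi ` torus_class ` ball x r}
    = torus_class ` ball x r \<union> torus_class ` ball (deck x) r"
    (is "?P = ?B \<union> ?B'")
proof
  have "ball (deck x) r \<subseteq> Reg"
    using assms deck_in_Reg by (auto simp flip: deck_ball)
  then have "?B \<union> ?B' \<subseteq> topspace torus_reg"
    using assms by (auto simp: topspace_torus_reg intro: quotientI)
  moreover have "Psi ` (?B \<union> ?B') = Psi ` ?B"
    using Psi_image_deck_ball[OF assms] by (simp only: image_Un Un_absorb)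
  ultimately show "?B \<union> ?B' \<subseteq> ?P"
  proof (intro subsetI CollectI conjI)
    fix C
    assume top: "?B \<union> ?B' \<subseteq> topspace torus_reg" and im: "Psi ` (?B \<union> ?B') = Psi ` ?B"
      and C: "C \<in> ?B \<union> ?B'"
    show "C \<in> topspace torus_reg"
      using top C by (rule subsetD)
    have "Psi C \<in> Psi ` (?B \<union> ?B')"
      using C by (rule imageI)
    then show "Psi C \<in> Psi ` ?B"
      by (simp only: im)
  qed
  show "?P \<subseteq> ?B \<union> ?B'"
  proof
    fix C
    assume C: "C \<in> ?P"
    then have "C \<in> Reg // piZ_rel"
      by (simp add: topspace_torus_reg)
    then obtain y where "y \<in> Reg" "C = torus_class y"
      by (rule quotientE)
    moreover obtain z where "z \<in> ball x r" "Psi C = Psi (torus_class z)"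
      using C by (auto simp only: mem_Collect_eq image_iff)
    moreover have "z \<in> Reg"
      using assms \<open>z \<in> ball x r\<close> by blast
    ultimately have "C = torus_class z \<or> C = torus_class (deck z)"
      using Psi_torus_class_eq_iff[of z y] by simp
    moreover have "deck z \<in> ball (deck x) r"
      using \<open>z \<in> ball x r\<close> by (auto simp flip: deck_ball)
    ultimately show "C \<in> ?B \<union> ?B'"
      using \<open>z \<in> ball x r\<close> by blast
  qed
qed

lemma Psi_evenly_covered:
  assumes "x \<in> Reg"
  shows "\<exists>T. Psi (torus_class x) \<in> T \<and> openin U_pm T \<and>
    (\<exists>V. \<Union>V = {C \<in> topspace torus_reg. Psi C \<in> T} \<and> (\<forall>u \<in> V. openin torus_reg u) \<and>
         pairwise disjnt V \<and>
         (\<forall>u \<in> V. homeomorphic_map (subtopology torus_reg u) (subtopology U_pm T) Psi))"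
proof -
  obtain e where "e > 0" "ball x e \<subseteq> Reg"
    using open_Reg assms open_contains_ball by blast
  define r where "r = min e (pi / 4)"
  have "r > 0" "r \<le> pi / 4" and B: "ball x r \<subseteq> Reg"
    using \<open>e > 0\<close> \<open>ball x e \<subseteq> Reg\<close> by (auto simp: r_def)
  have B': "ball (deck x) r \<subseteq> Reg"
    using B deck_in_Reg by (auto simp flip: deck_ball)
  define T where "T = Psi ` torus_class ` ball x r"
  define V where "V = {torus_class ` ball x r, torus_class ` ball (deck x) r}"
  have "\<forall>u \<in> V. openin torus_reg u \<and>
      homeomorphic_map (subtopology torus_reg u) (subtopology U_pm T) Psi"
    using homeomorphic_map_Psi_ball[OF B \<open>r \<le> pi / 4\<close>]
      homeomorphic_map_Psi_ball[OF B' \<open>r \<le> pi / 4\<close>] Psi_image_deck_ball[OF B]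
    by (simp add: V_def T_def)
  moreover have "Psi (torus_class x) \<in> T"
    using \<open>r > 0\<close> by (simp add: T_def)
  moreover have "openin U_pm T"
    using open_map_Psi homeomorphic_map_Psi_ball[OF B \<open>r \<le> pi / 4\<close>]
    by (simp add: open_map_def T_def)
  moreover have "pairwise disjnt V"
    using disjnt_torus_class_deck_ball[OF B \<open>r \<le> pi / 4\<close>]
    by (auto simp: V_def pairwise_insert disjnt_sym)
  moreover have "\<Union>V = {C \<in> topspace torus_reg. Psi C \<in> T}"
    using Psi_preimage_ball[OF B] by (simp add: V_def T_def)
  ultimately show ?thesis
    by blast
qed

theorem proposition4p7:
  shows "two_fold_covering_map torus_reg U_pm Psi \<and>
    (\<forall>a b c. sin (2 * b) \<noteq> 0 \<longrightarrow>
       {C \<in> topspace torus_reg. Psi C = Psi (piZ_rel `` {(a, b, c)})} =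
       {piZ_rel `` {(a, b, c)}, piZ_rel `` {(a + pi / 2, - b, c + pi / 2)}})"
proof (intro conjI allI impI)
  show "two_fold_covering_map torus_reg U_pm Psi"
    unfolding two_fold_covering_map_def covering_map_def
  proof (intro conjI ballI)
    fix y
    assume "y \<in> topspace U_pm"
    then obtain x where "x \<in> Reg" "y = Psi (torus_class x)"
      by (rule topspace_U_pmE)
    then show "card {C \<in> topspace torus_reg. Psi C = y} = 2"
      and "\<exists>T. y \<in> T \<and> openin U_pm T \<and>
        (\<exists>V. \<Union>V = {C \<in> topspace torus_reg. Psi C \<in> T} \<and> (\<forall>u \<in> V. openin torus_reg u) \<and>
             pairwise disjnt V \<and>
             (\<forall>u \<in> V. homeomorphic_map (subtopology torus_reg u) (subtopology U_pm T) Psi))"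
      using card_Psi_fibre Psi_evenly_covered by blast+
  qed (simp_all add: continuous_map_Psi Psi_surj)
next
  fix a b c :: real
  assume "sin (2 * b) \<noteq> 0"
  then show "{C \<in> topspace torus_reg. Psi C = Psi (piZ_rel `` {(a, b, c)})} =
       {piZ_rel `` {(a, b, c)}, piZ_rel `` {(a + pi / 2, - b, c + pi / 2)}}"
    using Psi_fibre[of "(a, b, c)"] by (simp add: Reg_def deck_def)
qed

end
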